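(* Let $M\ge1$, $K\ge2$ and $n\ge MK$ be integers. For each problem $m\in\{1,\dots,M\}$ let $\nu_1(m),\dots,\nu_K(m)$ be probability distributions supported on $[0,1]$ with means $\mu_1(m)>\mu_2(m)>\cdots>\mu_K(m)$. Let $(J_1,1),\dots,(J_M,M)$ be the arms output by the multi-bandit SAR (Successive Accepts and Rejects) algorithm, described in the context, run with budget $n$. Then the probability of error $$e_n=\mathbb{P}\big(\exists m\in\{1,\dots,M\}: J_m\neq 1\big)$$ satisfies $$e_n\le 2M^2K^2\exp\left(-\frac{n-MK}{8\,\overline{\log}(MK)\,H_2^{[M]}}\right),$$ where $\overline{\log}(MK)=\frac12+\sum_{i=2}^{MK}\frac1i$.
   Context: Multi-bandit model. There are $M$ problems, each with $K$ arms; $(i,m)$ denotes arm $i$ in problem $m$, with unknown distribution $\nu_i(m)$ on $[0,1]$ and mean $\mu_i(m)$. At each round $t=1,\dots,n$ the agent chooses a pair $(I_t,m_t)$ (possibly depending on past observations) and observes a reward drawn from $\nu_{I_t}(m_t)$, independently of the past given the choice. Write $X_{i,s}(m)$ for the $s$-th reward obtained from arm $(i,m)$ and $\widehat\mu_{i,s}(m)=\frac1s\sum_{t=1}^sX_{i,t}(m)$. Gaps and complexity. For each problem $m$, let $\Delta_1(m)=\mu_1(m)-\mu_2(m)$ and $\Delta_i(m)=\mu_1(m)-\mu_i(m)$ for $i\neq1$. Let $\Delta_1^{[M]}\le\Delta_2^{[M]}\le\cdots\le\Delta_{MK}^{[M]}$ be the rearrangement in ascending order of the multiset $\{\Delta_i(m):1\le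 i\le K,\,1\le m\le M\}$, and set $H_2^{[M]}=\max_{k\in\{1,\dots,MK\}}k\,\big(\Delta_k^{[M]}\big)^{-2}$. Multi-bandit SAR algorithm. Let $A_1=\{(i,m):1\le i\le K,1\le m\le M\}$, $\overline{\log}(MK)=\frac12+\sum_{i=2}^{MK}\frac1i$, $n_0=0$, and for $k\in\{1,\dots,MK-1\}$ let $n_k=\left\lceil\frac{1}{\overline{\log}(MK)}\frac{n-MK}{MK+1-k}\right\rceil$. A problem is active at phase $k$ if it has at least one active arm in $A_k$. For each phase $k=1,\dots,MK-1$: (1) For each active pair $(i,m)\in A_k$, pull arm $i$ in problem $m$ exactly $n_k-n_{k-1}$ times. (2) For each active problem $m$, let $h_k(m)$ be an arm with the highest empirical mean $\widehat\mu_{i,n_k}(m)$ among the $i$ with $(i,m)\in A_k$. (3) If there is a problem $m$ such that $h_k(m)$ is the last active arm in problem $m$, then deactivate both the arm and the problem and accept the arm: set $A_{k+1}=A_k\setminus\{(h_k(m),m)\}$ and $J_m=h_k(m)$; in this case skip step (4). (4) Otherwise let $(i_k,m_k)\in\arg\max_{(i,m)\in A_k}\big(\widehat\mu_{h_k(m),n_k}(m)-\widehat\mu_{i,n_k}(m)\big)$ (ties broken arbitrarily) and deactivate it: $A_{k+1}=A_k\setminus\{(i_k,m_k)\}$. Output: the $M$ accepted arms $(J_1,1),\dots,(J_M,M)$, where the last accepted arm is the unique element of $A_{MK}$. *)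

theory Defs
  imports "HOL-Probability.Probability" "HOL-Library.Multiset"
begin

text \<open>Arms are indexed i in {1..K}, problems m in {1..M}; arm 1 is the best arm.
  The randomness is modelled by a reward table: omega (i,m,s) is the s-th reward
  X_{i,s}(m) obtained from arm (i,m), s in {1..n}; the entries are independent with
  law nu i m.  The SAR algorithm is a deterministic function of this table and of
  (arbitrary, deterministic) tie-breaking rules.\<close>

definition logbar :: "nat \<Rightarrow> real" where
  "logbar N = 1/2 + (\<Sum>i=2..N. 1 / real i)"

definition sar_nk :: "nat \<Rightarrow> nat \<Rightarrow> nat \<Rightarrow> nat" where
  "sar_nk N n k = (if k = 0 then 0
     else nat \<lceil>(1 / logbar N) * ((real n - real N) / real (N + 1 - k))\<rceil>)"

definition emp_mean :: "(nat \<times> nat \<times> nat \<Rightarrow> real) \<Rightarrow> nat \<Rightarrow> nat \<Rightarrow> nat \<Rightarrow> real" where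
  "emp_mean \<omega> t i m = (\<Sum>s\<in>{1..t}. \<omega> (i, m, s)) / real t"

text \<open>One phase k of multi-bandit SAR, acting on the state (active set A, accepted arms J).
  tbH k m S: choice of h_k(m) among the empirical maximisers S of problem m;
  tbP k S: choice of the problem among those whose h_k(m) is the last active arm;
  tbR k S: choice of the pair to deactivate among the maximisers of the empirical gap.\<close>
definition sar_step ::
  "nat \<Rightarrow> nat \<Rightarrow> nat \<Rightarrow> (nat \<Rightarrow> nat \<Rightarrow> nat set \<Rightarrow> nat) \<Rightarrow> (nat \<Rightarrow> nat set \<Rightarrow> nat)
   \<Rightarrow> (nat \<Rightarrow> (nat \<times> nat) set \<Rightarrow> nat \<times> nat) \<Rightarrow> (nat \<times> nat \<times> nat \<Rightarrow> real) \<Rightarrow> nat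
   \<Rightarrow> (nat \<times> nat) set \<times> (nat \<Rightarrow> nat) \<Rightarrow> (nat \<times> nat) set \<times> (nat \<Rightarrow> nat)" where
  "sar_step M K n tbH tbP tbR \<omega> k st =
    (let A = fst st; J = snd st;
         t = sar_nk (M * K) n k;
         mu = (\<lambda>i m. emp_mean \<omega> t i m);
         h = (\<lambda>m. tbH k m {i. (i, m) \<in> A \<and> (\<forall>j. (j, m) \<in> A \<longrightarrow> mu j m \<le> mu i m)});
         L = {m. \<exists>i. (i, m) \<in> A \<and> (\<forall>j. (j, m) \<in> A \<longrightarrow> j = i)}
     in if L \<noteq> {} then
          (let m = tbP k L in (A - {(h m, m)}, J(m := h m)))
        else
          (let gap = (\<lambda>p. mu (h (snd p)) (snd p) - mu (fst p) (snd p));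
               r = tbR k {p \<in> A. \<forall>q \<in> A. gap q \<le> gap p}
           in (A - {r}, J)))"

text \<open>State after phases 1..k: sar_state ... k = (A_{k+1}, accepted arms so far).\<close>
fun sar_state ::
  "nat \<Rightarrow> nat \<Rightarrow> nat \<Rightarrow> (nat \<Rightarrow> nat \<Rightarrow> nat set \<Rightarrow> nat) \<Rightarrow> (nat \<Rightarrow> nat set \<Rightarrow> nat)
   \<Rightarrow> (nat \<Rightarrow> (nat \<times> nat) set \<Rightarrow> nat \<times> nat) \<Rightarrow> (nat \<times> nat \<times> nat \<Rightarrow> real) \<Rightarrow> nat
   \<Rightarrow> (nat \<times> nat) set \<times> (nat \<Rightarrow> nat)" where
  "sar_state M K n tbH tbP tbR \<omega> 0 = ({1..K} \<times> {1..M}, (\<lambda>_. 0))"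
| "sar_state M K n tbH tbP tbR \<omega> (Suc k) =
     sar_step M K n tbH tbP tbR \<omega> (Suc k) (sar_state M K n tbH tbP tbR \<omega> k)"

text \<open>Output: J m is the accepted arm of problem m; the last accepted arm is the
  unique element of A_{MK}.\<close>
definition sar_output ::
  "nat \<Rightarrow> nat \<Rightarrow> nat \<Rightarrow> (nat \<Rightarrow> nat \<Rightarrow> nat set \<Rightarrow> nat) \<Rightarrow> (nat \<Rightarrow> nat set \<Rightarrow> nat)
   \<Rightarrow> (nat \<Rightarrow> (nat \<times> nat) set \<Rightarrow> nat \<times> nat) \<Rightarrow> (nat \<times> nat \<times> nat \<Rightarrow> real) \<Rightarrow> nat \<Rightarrow> nat" where
  "sar_output M K n tbH tbP tbR \<omega> =
    (let st = sar_state M K n tbH tbP tbR \<omega> (M * K - 1);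
         p = the_elem (fst st)
     in (snd st)(snd p := fst p))"

definition reward_space :: "nat \<Rightarrow> nat \<Rightarrow> nat \<Rightarrow> (nat \<Rightarrow> nat \<Rightarrow> real measure)
    \<Rightarrow> (nat \<times> nat \<times> nat \<Rightarrow> real) measure" where
  "reward_space M K n \<nu> = PiM ({1..K} \<times> {1..M} \<times> {1..n}) (\<lambda>(i, m, s). \<nu> i m)"

definition arm_mean :: "(nat \<Rightarrow> nat \<Rightarrow> real measure) \<Rightarrow> nat \<Rightarrow> nat \<Rightarrow> real" where
  "arm_mean \<nu> i m = integral\<^sup>L (\<nu> i m) (\<lambda>x. x)"

definition gap :: "(nat \<Rightarrow> nat \<Rightarrow> real measure) \<Rightarrow> nat \<Rightarrow> nat \<Rightarrow> real" where
  "gap \<nu> i m = (if i = 1 then arm_mean \<nu> 1 m - arm_mean \<nu> 2 m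
                else arm_mean \<nu> 1 m - arm_mean \<nu> i m)"

text \<open>Sorted gaps Delta_1^[M] <= ... <= Delta_{MK}^[M] (as a 0-indexed list) and H_2^[M].\<close>
definition sorted_gaps :: "(nat \<Rightarrow> nat \<Rightarrow> real measure) \<Rightarrow> nat \<Rightarrow> nat \<Rightarrow> real list" where
  "sorted_gaps \<nu> M K = sorted_list_of_multiset
     (image_mset (\<lambda>p. gap \<nu> (fst p) (snd p)) (mset_set ({1..K} \<times> {1..M})))"

definition H2 :: "(nat \<Rightarrow> nat \<Rightarrow> real measure) \<Rightarrow> nat \<Rightarrow> nat \<Rightarrow> real" where
  "H2 \<nu> M K = Max ((\<lambda>k. real k / (sorted_gaps \<nu> M K ! (k - 1))\<^sup>2) ` {1..M * K})"

end

theory Submission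
  imports Defs
begin

text \<open>Call a reward table good if at every phase k every empirical mean is within
  D/4 of its true mean, where D is the (MK+1-k)-th smallest gap. On a good table SAR never
  discards a best arm: if a best arm (1,m) were the pair with the largest empirical gap, then
  among the MK+1-k active pairs one finds a suboptimal arm (j,m') with gap at least D, whose
  empirical gap exceeds D/2, whereas that of (1,m) is below D/2. By Hoeffding, phase k lasts
  long enough that each of the at most (MK)^2 deviation events has probability at most
  2 exp(-(n-MK)/(8 logbar(MK) H2)), and the union bound concludes.\<close>

section \<open>Order statistics\<close>

lemma length_filter_less_sorted_nth:
  fixes xs :: "'a::linorder list"
  assumes "sorted xs" "c < length xs"
  shows "length (filter (\<lambda>x. x < xs ! c) xs) \<le> c"
proof -
  let ?P = "\<lambda>x. x < xs ! c"
  have "filter ?P (drop c xs) = []"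
  proof (rule filter_False, rule ballI)
    fix x assume "x \<in> set (drop c xs)"
    then obtain j where "c + j < length xs" "x = xs ! (c + j)"
      using assms(2) by (auto simp: in_set_conv_nth less_diff_conv add.commute)
    then show "\<not> ?P x"
      using assms sorted_nth_mono[of xs c "c + j"] by auto
  qed
  then have "length (filter ?P xs) = length (filter ?P (take c xs))"
    by (metis append_take_drop_id filter_append length_append list.size(3) add_0_right)
  also have "\<dots> \<le> c"
    using length_filter_le[of ?P "take c xs"] by simp
  finally show ?thesis .
qed

lemma exists_ge_sorted_image_nth:
  fixes g :: "'a \<Rightarrow> 'b::linorder"
  assumes "finite B" "A \<subseteq> B" "A \<noteq> {}"
  shows "\<exists>p\<in>A. sorted_list_of_multiset (image_mset g (mset_set B)) ! (card A - 1) \<le> g p"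
proof (rule ccontr)
  let ?xs = "sorted_list_of_multiset (image_mset g (mset_set B))"
  let ?v = "?xs ! (card A - 1)"
  assume "\<not> ?thesis"
  then have below: "\<forall>p\<in>A. g p < ?v" by auto
  have card_A: "1 \<le> card A" "card A \<le> card B"
    using assms by (auto simp: Suc_le_eq card_gt_0_iff finite_subset card_mono)
  have length_xs: "length ?xs = card B"
    by (metis mset_sorted_list_of_multiset size_image_mset size_mset size_mset_set)
  have "length (filter (\<lambda>x. x < ?v) ?xs) = size (filter_mset (\<lambda>x. x < ?v) (mset ?xs))"
    by (metis mset_filter size_mset)
  also have "\<dots> = card {p\<in>B. g p < ?v}"
    using assms(1) by (simp add: filter_mset_image_mset)
  finally have "length (filter (\<lambda>x. x < ?v) ?xs) = card {p\<in>B. g p < ?v}" .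
  moreover have "card A \<le> card {p\<in>B. g p < ?v}"
    using below assms by (intro card_mono) auto
  moreover have "length (filter (\<lambda>x. x < ?v) ?xs) \<le> card A - 1"
    using card_A length_xs
    by (intro length_filter_less_sorted_nth) (simp_all add: sorted_sorted_list_of_multiset)
  ultimately show False using card_A by linarith
qed

section \<open>Gaps\<close>

definition strictly_ordered_means :: "(nat \<Rightarrow> nat \<Rightarrow> real measure) \<Rightarrow> nat \<Rightarrow> nat \<Rightarrow> bool" where
  "strictly_ordered_means \<nu> M K \<longleftrightarrow>
     (\<forall>m\<in>{1..M}. \<forall>i j. 1 \<le> i \<longrightarrow> i < j \<longrightarrow> j \<le> K \<longrightarrow> arm_mean \<nu> j m < arm_mean \<nu> i m)"

lemma arm_mean_le_best:
  assumes "strictly_ordered_means \<nu> M K" "i \<in> {1..K}" "m \<in> {1..M}"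
  shows "arm_mean \<nu> i m \<le> arm_mean \<nu> 1 m"
  using assms by (cases "i = 1") (auto simp: strictly_ordered_means_def intro: less_imp_le)

lemma gap_best_le_gap:
  assumes "strictly_ordered_means \<nu> M K" "j \<in> {1..K}" "j \<noteq> 1" "m \<in> {1..M}"
  shows "gap \<nu> 1 m \<le> gap \<nu> j m"
proof -
  have "arm_mean \<nu> j m \<le> arm_mean \<nu> 2 m"
    using assms by (cases "j = 2") (auto simp: strictly_ordered_means_def intro: less_imp_le)
  then show ?thesis
    using assms(3) by (simp add: gap_def)
qed

lemma gap_pos:
  assumes "strictly_ordered_means \<nu> M K" "2 \<le> K" "i \<in> {1..K}" "m \<in> {1..M}"
  shows "0 < gap \<nu> i m"
  using assms by (auto simp: gap_def strictly_ordered_means_def)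

lemma length_sorted_gaps: "length (sorted_gaps \<nu> M K) = M * K"
proof -
  have "length (sorted_gaps \<nu> M K) = size (mset (sorted_gaps \<nu> M K))"
    by (simp only: size_mset)
  also have "\<dots> = card ({1..K} \<times> {1..M})"
    unfolding sorted_gaps_def
    by (simp only: mset_sorted_list_of_multiset size_image_mset size_mset_set)
  finally show ?thesis by (simp add: card_cartesian_product)
qed

lemma sorted_gaps_nth_pos:
  assumes "strictly_ordered_means \<nu> M K" "2 \<le> K" "j < M * K"
  shows "0 < sorted_gaps \<nu> M K ! j"
proof -
  have "sorted_gaps \<nu> M K ! j \<in> set (sorted_gaps \<nu> M K)"
    using assms(3) by (simp add: length_sorted_gaps)
  also have "set (sorted_gaps \<nu> M K) = (\<lambda>p. gap \<nu> (fst p) (snd p)) ` ({1..K} \<times> {1..M})"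
    unfolding sorted_gaps_def by simp
  finally show ?thesis
    using gap_pos[OF assms(1,2)] by auto
qed

lemma H2_ge:
  assumes "k \<in> {1..M * K}"
  shows "real k / (sorted_gaps \<nu> M K ! (k - 1))\<^sup>2 \<le> H2 \<nu> M K"
  unfolding H2_def using assms by (intro Max_ge) auto

section \<open>One phase of SAR\<close>

definition picks_from :: "('a set \<Rightarrow> 'a) \<Rightarrow> bool" where
  "picks_from f \<longleftrightarrow> (\<forall>S. finite S \<longrightarrow> S \<noteq> {} \<longrightarrow> f S \<in> S)"

definition emp_leaders :: "(nat \<times> nat) set \<Rightarrow> (nat \<Rightarrow> nat \<Rightarrow> real) \<Rightarrow> nat \<Rightarrow> nat set" where
  "emp_leaders A mu m = {i. (i, m) \<in> A \<and> (\<forall>j. (j, m) \<in> A \<longrightarrow> mu j m \<le> mu i m)}"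

definition last_arm_problems :: "(nat \<times> nat) set \<Rightarrow> nat set" where
  "last_arm_problems A = {m. \<exists>i. (i, m) \<in> A \<and> (\<forall>j. (j, m) \<in> A \<longrightarrow> j = i)}"

definition emp_gap_maximisers ::
  "(nat \<times> nat) set \<Rightarrow> (nat \<Rightarrow> nat \<Rightarrow> real) \<Rightarrow> (nat \<Rightarrow> nat) \<Rightarrow> (nat \<times> nat) set" where
  "emp_gap_maximisers A mu h =
     {p \<in> A. \<forall>q \<in> A. mu (h (snd q)) (snd q) - mu (fst q) (snd q)
                    \<le> mu (h (snd p)) (snd p) - mu (fst p) (snd p)}"

lemma sar_step_eq:
  "sar_step M K n tbH tbP tbR \<omega> k (A, J) =
     (let mu = emp_mean \<omega> (sar_nk (M * K) n k);
          h = (\<lambda>m. tbH k m (emp_leaders A mu m));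
          L = last_arm_problems A
      in if L \<noteq> {} then (A - {(h (tbP k L), tbP k L)}, J(tbP k L := h (tbP k L)))
         else (A - {tbR k (emp_gap_maximisers A mu h)}, J))"
  unfolding sar_step_def emp_leaders_def last_arm_problems_def emp_gap_maximisers_def Let_def
    fst_conv snd_conv
  by (rule refl)

lemma finite_arg_max_exists:
  fixes f :: "'a \<Rightarrow> 'b::linorder"
  assumes "finite X" "X \<noteq> {}"
  shows "\<exists>x\<in>X. \<forall>y\<in>X. f y \<le> f x"
proof -
  have "Max (f ` X) \<in> f ` X" using assms by simp
  then obtain x where "x \<in> X" "f x = Max (f ` X)" by auto
  then show ?thesis using assms by (auto intro!: bexI[of _ x] Max_ge)
qed

lemma finite_last_arm_problems:
  assumes "finite A"
  shows "finite (last_arm_problems A)"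
  using finite_imageI[OF assms, of snd] unfolding last_arm_problems_def
  by (rule finite_subset[rotated]) force

lemma emp_leader_mem:
  assumes "picks_from f" "finite A" "(i, m) \<in> A"
  shows "f (emp_leaders A mu m) \<in> emp_leaders A mu m"
proof -
  let ?X = "{i. (i, m) \<in> A}"
  have "finite ?X"
    using finite_imageI[OF assms(2), of fst] by (rule finite_subset[rotated]) force
  moreover have "?X \<noteq> {}" using assms(3) by blast
  ultimately obtain i0 where "i0 \<in> ?X" "\<forall>j\<in>?X. mu j m \<le> mu i0 m"
    using finite_arg_max_exists[of ?X "\<lambda>j. mu j m"] by blast
  then have "i0 \<in> emp_leaders A mu m"
    unfolding emp_leaders_def by auto
  moreover have "finite (emp_leaders A mu m)"
    using \<open>finite ?X\<close> by (rule finite_subset[rotated]) (auto simp: emp_leaders_def)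
  ultimately show ?thesis
    using assms(1) unfolding picks_from_def by blast
qed

lemma emp_gap_maximiser_mem:
  assumes "picks_from f" "finite A" "A \<noteq> {}"
  shows "f (emp_gap_maximisers A mu h) \<in> emp_gap_maximisers A mu h"
proof -
  let ?g = "\<lambda>p. mu (h (snd p)) (snd p) - mu (fst p) (snd p)"
  obtain p where "p \<in> A" "\<forall>q\<in>A. ?g q \<le> ?g p"
    using finite_arg_max_exists[OF assms(2,3), of ?g] by blast
  then have "p \<in> emp_gap_maximisers A mu h"
    unfolding emp_gap_maximisers_def by auto
  moreover have "finite (emp_gap_maximisers A mu h)"
    using assms(2) by (simp add: emp_gap_maximisers_def)
  ultimately show ?thesis
    using assms(1) unfolding picks_from_def by blast
qed

definition keeps_best_arms :: "nat \<Rightarrow> (nat \<times> nat) set \<Rightarrow> (nat \<Rightarrow> nat) \<Rightarrow> bool" where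
  "keeps_best_arms M A J \<longleftrightarrow> (\<forall>m\<in>{1..M}. (1, m) \<in> A \<or> (J m = 1 \<and> (\<forall>i. (i, m) \<notin> A)))"

definition estimates_within ::
  "(nat \<Rightarrow> nat \<Rightarrow> real measure) \<Rightarrow> nat \<Rightarrow> nat \<Rightarrow> (nat \<Rightarrow> nat \<Rightarrow> real) \<Rightarrow> real \<Rightarrow> bool" where
  "estimates_within \<nu> M K mu \<epsilon> \<longleftrightarrow>
     (\<forall>i\<in>{1..K}. \<forall>m\<in>{1..M}. \<bar>mu i m - arm_mean \<nu> i m\<bar> < \<epsilon>)"

lemma keeps_best_arms_accept:
  assumes "keeps_best_arms M A J" "A \<subseteq> {1..K} \<times> {1..M}"
    and "m0 \<in> last_arm_problems A" "(i, m0) \<in> A"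
  shows "i = 1" "keeps_best_arms M (A - {(1, m0)}) (J(m0 := 1))"
proof -
  obtain i0 where i0: "(i0, m0) \<in> A" "\<And>j. (j, m0) \<in> A \<Longrightarrow> j = i0"
    using assms(3) unfolding last_arm_problems_def by blast
  have "m0 \<in> {1..M}" using assms(2) i0(1) by auto
  then have "(1, m0) \<in> A"
    using assms(1) i0(1) unfolding keeps_best_arms_def by blast
  then have only_best: "(j, m0) \<in> A \<longleftrightarrow> j = 1" for j
    using i0(2) by metis
  then show "i = 1"
    using assms(4) by blast
  show "keeps_best_arms M (A - {(1, m0)}) (J(m0 := 1))"
    unfolding keeps_best_arms_def
  proof
    fix m assume "m \<in> {1..M}"
    then show "(1, m) \<in> A - {(1, m0)} \<or> ((J(m0 := 1)) m = 1 \<and> (\<forall>i. (i, m) \<notin> A - {(1, m0)}))"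
      using assms(1) only_best unfolding keeps_best_arms_def by (cases "m = m0") auto
  qed
qed

lemma keeps_best_arms_reject:
  assumes "keeps_best_arms M A J" "fst r \<noteq> 1"
  shows "keeps_best_arms M (A - {r}) J"
  using assms unfolding keeps_best_arms_def by auto

lemma exists_suboptimal_arm_with_large_gap:
  assumes means: "strictly_ordered_means \<nu> M K"
    and A: "A \<subseteq> {1..K} \<times> {1..M}" "A \<noteq> {}"
    and has_rival: "\<And>m. (1, m) \<in> A \<Longrightarrow> \<exists>j. j \<noteq> 1 \<and> (j, m) \<in> A"
  shows "\<exists>(j, m)\<in>A. j \<noteq> 1 \<and> sorted_gaps \<nu> M K ! (card A - 1) \<le> gap \<nu> j m"
proof -
  obtain i m where p: "(i, m) \<in> A" "sorted_gaps \<nu> M K ! (card A - 1) \<le> gap \<nu> i m"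
    using exists_ge_sorted_image_nth[OF _ A, of "\<lambda>p. gap \<nu> (fst p) (snd p)"]
    unfolding sorted_gaps_def by auto
  show ?thesis
  proof (cases "i = 1")
    case True
    then obtain j where "j \<noteq> 1" "(j, m) \<in> A"
      using has_rival p(1) by blast
    moreover have "gap \<nu> 1 m \<le> gap \<nu> j m"
      using gap_best_le_gap[OF means] calculation A(1) by blast
    ultimately show ?thesis
      using p(2) True by force
  qed (use p in blast)
qed

lemma emp_gap_maximiser_not_best:
  fixes mu :: "nat \<Rightarrow> nat \<Rightarrow> real"
  assumes means: "strictly_ordered_means \<nu> M K" and K: "2 \<le> K"
    and A: "A \<subseteq> {1..K} \<times> {1..M}"
    and best_active: "\<And>i m. (i, m) \<in> A \<Longrightarrow> (1, m) \<in> A"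
    and has_rival: "\<And>m. (1, m) \<in> A \<Longrightarrow> \<exists>j. j \<noteq> 1 \<and> (j, m) \<in> A"
    and accurate: "estimates_within \<nu> M K mu (sorted_gaps \<nu> M K ! (card A - 1) / 4)"
    and leader: "\<And>i m. (i, m) \<in> A \<Longrightarrow> (h m, m) \<in> A \<and> mu i m \<le> mu (h m) m"
    and r: "r \<in> emp_gap_maximisers A mu h"
  shows "fst r \<noteq> 1"
proof
  assume "fst r = 1"
  then obtain m where r_eq: "r = (1, m)" by (metis prod.collapse)
  let ?D = "sorted_gaps \<nu> M K ! (card A - 1)"
  let ?\<mu> = "arm_mean \<nu>"
  have "A \<noteq> {}" using r by (auto simp: emp_gap_maximisers_def)
  then obtain j m' where jm': "(j, m') \<in> A" "j \<noteq> 1" "?D \<le> gap \<nu> j m'"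
    using exists_suboptimal_arm_with_large_gap[OF means A] has_rival by blast
  have in_box: "j \<in> {1..K}" "m' \<in> {1..M}" "m \<in> {1..M}" "h m \<in> {1..K}" "1 \<in> {1..K}"
    using A jm'(1) r leader[of 1 m] K by (auto simp: r_eq emp_gap_maximisers_def)
  have close: "\<bar>mu i m'' - ?\<mu> i m''\<bar> < ?D / 4" if "i \<in> {1..K}" "m'' \<in> {1..M}" for i m''
    using accurate that unfolding estimates_within_def by blast
  have "mu (h m') m' - mu j m' \<le> mu (h m) m - mu 1 m"
    using r jm'(1) unfolding r_eq emp_gap_maximisers_def by auto
  moreover have "mu 1 m' \<le> mu (h m') m'"
    using leader best_active[OF jm'(1)] by blast
  moreover have "?\<mu> (h m) m \<le> ?\<mu> 1 m"
    using arm_mean_le_best[OF means] in_box by blast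
  moreover have "gap \<nu> j m' = ?\<mu> 1 m' - ?\<mu> j m'"
    using jm'(2) by (simp add: gap_def)
  ultimately show False
    using jm'(3) close[of j m'] close[of 1 m'] close[of 1 m] close[of "h m" m] in_box
    unfolding abs_less_iff by linarith
qed

lemma sar_step_keeps_best_arms:
  assumes means: "strictly_ordered_means \<nu> M K" and K: "2 \<le> K"
    and picks: "\<And>k m. picks_from (tbH k m)" "\<And>k. picks_from (tbP k)" "\<And>k. picks_from (tbR k)"
    and A: "A \<subseteq> {1..K} \<times> {1..M}" "2 \<le> card A"
    and keeps: "keeps_best_arms M A J"
    and accurate: "estimates_within \<nu> M K (emp_mean \<omega> (sar_nk (M * K) n k))
                     (sorted_gaps \<nu> M K ! (card A - 1) / 4)"
    and step: "sar_step M K n tbH tbP tbR \<omega> k (A, J) = (A', J')"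
  shows "\<exists>p\<in>A. A' = A - {p}" "keeps_best_arms M A' J'"
proof -
  define mu where "mu = emp_mean \<omega> (sar_nk (M * K) n k)"
  define h where "h = (\<lambda>m. tbH k m (emp_leaders A mu m))"
  define L where "L = last_arm_problems A"
  have fin: "finite A" using A(1) finite_subset by blast
  have leader: "(h m, m) \<in> A \<and> mu i m \<le> mu (h m) m" if "(i, m) \<in> A" for i m
    using emp_leader_mem[OF picks(1)[of k m] fin that, of mu] that
    unfolding h_def emp_leaders_def by blast
  have best_active: "(1, m) \<in> A" if "(i, m) \<in> A" for i m
    using keeps A(1) that unfolding keeps_best_arms_def by blast
  have step_eq: "(A', J') = (if L \<noteq> {} then (A - {(h (tbP k L), tbP k L)}, J(tbP k L := h (tbP k L)))
                             else (A - {tbR k (emp_gap_maximisers A mu h)}, J))"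
    using step unfolding sar_step_eq mu_def h_def L_def Let_def by simp
  have "(\<exists>p\<in>A. A' = A - {p}) \<and> keeps_best_arms M A' J'"
  proof (cases "L \<noteq> {}")
    case True
    define m0 where "m0 = tbP k L"
    have "m0 \<in> L"
      using picks(2) True finite_last_arm_problems[OF fin] unfolding m0_def L_def picks_from_def by blast
    then obtain i where "(i, m0) \<in> A" unfolding L_def last_arm_problems_def by blast
    then have "(h m0, m0) \<in> A" using leader by blast
    with keeps_best_arms_accept[OF keeps A(1) \<open>m0 \<in> L\<close>[unfolded L_def]] show ?thesis
      using step_eq True \<open>(h m0, m0) \<in> A\<close> unfolding m0_def by auto
  next
    case False
    define r where "r = tbR k (emp_gap_maximisers A mu h)"
    have "A \<noteq> {}" using A(2) by auto
    then have r_max: "r \<in> emp_gap_maximisers A mu h"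
      unfolding r_def by (rule emp_gap_maximiser_mem[OF picks(3) fin])
    have has_rival: "\<exists>j. j \<noteq> 1 \<and> (j, m) \<in> A" if "(1, m) \<in> A" for m
      using False that unfolding L_def last_arm_problems_def by blast
    have "fst r \<noteq> 1"
      by (rule emp_gap_maximiser_not_best[OF means K A(1) _ _ _ _ r_max])
         (use best_active has_rival leader accurate[folded mu_def] in blast)+
    then show ?thesis
      using step_eq False r_max keeps_best_arms_reject[OF keeps]
      unfolding r_def emp_gap_maximisers_def by auto
  qed
  then show "\<exists>p\<in>A. A' = A - {p}" "keeps_best_arms M A' J'" by blast+
qed

lemma sar_state_subset: "fst (sar_state M K n tbH tbP tbR \<omega> k) \<subseteq> {1..K} \<times> {1..M}"
proof (induction k)
  case (Suc k)
  have "fst (sar_step M K n tbH tbP tbR \<omega> (Suc k) st) \<subseteq> fst st" for st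
    unfolding sar_step_def Let_def by auto
  then show ?case using Suc by (metis sar_state.simps(2) subset_trans)
qed simp

lemma sar_state_keeps_best_arms:
  assumes means: "strictly_ordered_means \<nu> M K" and K: "2 \<le> K"
    and picks: "\<And>k m. picks_from (tbH k m)" "\<And>k. picks_from (tbP k)" "\<And>k. picks_from (tbR k)"
    and good: "\<And>k. k \<in> {1..M * K - 1} \<Longrightarrow> estimates_within \<nu> M K
                 (emp_mean \<omega> (sar_nk (M * K) n k)) (sorted_gaps \<nu> M K ! (M * K - k) / 4)"
    and k: "k \<le> M * K - 1"
  shows "card (fst (sar_state M K n tbH tbP tbR \<omega> k)) = M * K - k
       \<and> keeps_best_arms M (fst (sar_state M K n tbH tbP tbR \<omega> k)) (snd (sar_state M K n tbH tbP tbR \<omega> k))"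
  using k
proof (induction k)
  case 0
  then show ?case using K by (simp add: keeps_best_arms_def mult.commute)
next
  case (Suc k)
  obtain A J where st: "sar_state M K n tbH tbP tbR \<omega> k = (A, J)" by fastforce
  have IH: "card A = M * K - k" "keeps_best_arms M A J"
    using Suc st by auto
  have A: "A \<subseteq> {1..K} \<times> {1..M}"
    using sar_state_subset[of M K n tbH tbP tbR \<omega> k] st by simp
  have "M * K - Suc k = card A - 1" "2 \<le> card A" using IH(1) Suc.prems by simp_all
  then have accurate: "estimates_within \<nu> M K (emp_mean \<omega> (sar_nk (M * K) n (Suc k)))
                         (sorted_gaps \<nu> M K ! (card A - 1) / 4)"
    using good[of "Suc k"] Suc.prems by simp
  obtain A' J' where step: "sar_step M K n tbH tbP tbR \<omega> (Suc k) (A, J) = (A', J')" by fastforce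
  note R = sar_step_keeps_best_arms[where tbH = tbH and tbP = tbP and tbR = tbR,
      OF means K picks A \<open>2 \<le> card A\<close> IH(2) accurate step]
  have "card A' = card A - 1"
    using R(1) A finite_subset by fastforce
  then show ?case
    using R(2) IH(1) st step by simp
qed

lemma sar_output_correct:
  assumes M: "1 \<le> M" and means: "strictly_ordered_means \<nu> M K" and K: "2 \<le> K"
    and picks: "\<And>k m. picks_from (tbH k m)" "\<And>k. picks_from (tbP k)" "\<And>k. picks_from (tbR k)"
    and good: "\<And>k. k \<in> {1..M * K - 1} \<Longrightarrow> estimates_within \<nu> M K
                 (emp_mean \<omega> (sar_nk (M * K) n k)) (sorted_gaps \<nu> M K ! (M * K - k) / 4)"
    and m: "m \<in> {1..M}"
  shows "sar_output M K n tbH tbP tbR \<omega> m = 1"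
proof -
  obtain A J where st: "sar_state M K n tbH tbP tbR \<omega> (M * K - 1) = (A, J)" by fastforce
  have "1 \<le> M * K" using M K by (simp add: Suc_le_eq)
  then have "card A = 1" "keeps_best_arms M A J"
    using sar_state_keeps_best_arms[where tbH = tbH and tbP = tbP and tbR = tbR and k = "M * K - 1",
      OF means K picks good] st by auto
  moreover obtain p where "A = {p}" using \<open>card A = 1\<close> by (auto simp: card_Suc_eq)
  ultimately show ?thesis
    using m st unfolding sar_output_def keeps_best_arms_def by (cases p) auto
qed

section \<open>Measurability of the error event\<close>

lemma sets_Collect_determined_by_finite_tests:
  assumes "finite D"
    and tests: "\<And>x. x \<in> D \<Longrightarrow> {\<omega> \<in> space N. T \<omega> x} \<in> sets N"
    and determined: "\<And>\<omega> \<omega>'. \<omega> \<in> space N \<Longrightarrow> \<omega>' \<in> space N \<Longrightarrow> (\<And>x. x \<in> D \<Longrightarrow> T \<omega> x = T \<omega>' x)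
                       \<Longrightarrow> P \<omega> \<Longrightarrow> P \<omega>'"
  shows "{\<omega> \<in> space N. P \<omega>} \<in> sets N"
proof -
  define W where "W = (\<lambda>\<omega>. restrict (T \<omega>) D) ` {\<omega> \<in> space N. P \<omega>}"
  have "finite W"
    by (rule finite_subset[of _ "PiE D (\<lambda>_. UNIV)"]) (auto simp: W_def assms(1) finite_PiE)
  have "{\<omega> \<in> space N. P \<omega>} = {\<omega> \<in> space N. \<exists>v\<in>W. \<forall>x\<in>D. T \<omega> x = v x}"
  proof (intro Collect_cong conj_cong refl iffI)
    fix \<omega> assume "\<omega> \<in> space N" "\<exists>v\<in>W. \<forall>x\<in>D. T \<omega> x = v x"
    then obtain \<omega>' where "\<omega>' \<in> space N" "P \<omega>'" "\<forall>x\<in>D. T \<omega> x = T \<omega>' x"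
      unfolding W_def by auto
    then show "P \<omega>" using determined[of \<omega>' \<omega>] \<open>\<omega> \<in> space N\<close> by simp
  qed (auto simp: W_def)
  moreover have "{\<omega> \<in> space N. T \<omega> x = b} \<in> sets N" if "x \<in> D" for x b
    using tests[OF that] sets.sets_Collect_neg[OF tests[OF that]] by (cases b) simp_all
  ultimately show ?thesis
    using \<open>finite W\<close> assms(1)
    by (simp only:) (intro sets.sets_Collect_finite_Ex sets.sets_Collect_finite_All)
qed

lemma measurable_PiM_component_borel:
  assumes "\<And>x. x \<in> I \<Longrightarrow> sets (F x) = sets borel"
  shows "(\<lambda>\<omega>. \<omega> x) \<in> borel_measurable (PiM I F)"
proof (cases "x \<in> I")
  case True
  have sets_x: "sets (F x) = sets borel" using True by (rule assms)
  from measurable_component_singleton[OF True, of F] show ?thesis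
    unfolding measurable_cong_sets[OF refl sets_x] .
next
  case False
  have "\<omega> x = undefined" if "\<omega> \<in> space (PiM I F)" for \<omega>
    using that False unfolding space_PiM by (rule PiE_arb)
  then show ?thesis
    using measurable_cong[of "PiM I F" "\<lambda>\<omega>. \<omega> x" "\<lambda>_. undefined" borel] by simp
qed

definition bounded_reward_laws :: "(nat \<Rightarrow> nat \<Rightarrow> real measure) \<Rightarrow> nat \<Rightarrow> nat \<Rightarrow> bool" where
  "bounded_reward_laws \<nu> M K \<longleftrightarrow> (\<forall>i\<in>{1..K}. \<forall>m\<in>{1..M}. prob_space (\<nu> i m)
     \<and> sets (\<nu> i m) = sets borel \<and> (AE x in \<nu> i m. x \<in> {0..1}))"

lemma borel_measurable_reward_space_component:
  assumes "bounded_reward_laws \<nu> M K"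
  shows "(\<lambda>\<omega>. \<omega> x) \<in> borel_measurable (reward_space M K n \<nu>)"
  unfolding reward_space_def
  by (rule measurable_PiM_component_borel) (use assms in \<open>auto simp: bounded_reward_laws_def\<close>)

lemma borel_measurable_emp_mean:
  assumes "bounded_reward_laws \<nu> M K"
  shows "(\<lambda>\<omega>. emp_mean \<omega> t i m) \<in> borel_measurable (reward_space M K n \<nu>)"
  using borel_measurable_reward_space_component[OF assms]
  unfolding emp_mean_def by measurable

definition deviation_event ::
  "nat \<Rightarrow> nat \<Rightarrow> nat \<Rightarrow> (nat \<Rightarrow> nat \<Rightarrow> real measure) \<Rightarrow> nat \<Rightarrow> nat \<Rightarrow> nat \<Rightarrow> real
     \<Rightarrow> (nat \<times> nat \<times> nat \<Rightarrow> real) set" where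
  "deviation_event M K n \<nu> t i m \<epsilon> =
     {\<omega> \<in> space (reward_space M K n \<nu>). \<epsilon> \<le> \<bar>emp_mean \<omega> t i m - arm_mean \<nu> i m\<bar>}"

lemma deviation_event_sets:
  assumes "bounded_reward_laws \<nu> M K"
  shows "deviation_event M K n \<nu> t i m \<epsilon> \<in> sets (reward_space M K n \<nu>)"
proof -
  have "(\<lambda>\<omega>. \<bar>emp_mean \<omega> t i m - arm_mean \<nu> i m\<bar>) \<in> borel_measurable (reward_space M K n \<nu>)"
    by (intro borel_measurable_abs borel_measurable_diff borel_measurable_emp_mean[OF assms]
        borel_measurable_const)
  then show ?thesis
    unfolding deviation_event_def by (simp add: borel_measurable_le)
qed

text \<open>SAR depends on the rewards only through these comparisons, which is what makes its
  error event measurable.\<close>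

definition emp_diff_le ::
  "(nat \<times> nat \<times> nat \<Rightarrow> real) \<Rightarrow> nat \<Rightarrow> nat \<times> nat \<Rightarrow> nat \<times> nat \<Rightarrow> nat \<times> nat \<Rightarrow> nat \<times> nat \<Rightarrow> bool" where
  "emp_diff_le \<omega> t a b c d \<longleftrightarrow>
     emp_mean \<omega> t (fst a) (snd a) - emp_mean \<omega> t (fst b) (snd b)
       \<le> emp_mean \<omega> t (fst c) (snd c) - emp_mean \<omega> t (fst d) (snd d)"

lemma sar_step_cong:
  assumes picks: "\<And>m. picks_from (tbH k m)" and fin: "finite A"
    and agree: "\<And>a b c d. a \<in> A \<Longrightarrow> b \<in> A \<Longrightarrow> c \<in> A \<Longrightarrow> d \<in> A \<Longrightarrow>
      emp_diff_le \<omega> (sar_nk (M * K) n k) a b c d = emp_diff_le \<omega>' (sar_nk (M * K) n k) a b c d"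
  shows "sar_step M K n tbH tbP tbR \<omega> k (A, J) = sar_step M K n tbH tbP tbR \<omega>' k (A, J)"
proof -
  define mu where "mu = emp_mean \<omega> (sar_nk (M * K) n k)"
  define mu' where "mu' = emp_mean \<omega>' (sar_nk (M * K) n k)"
  define h where "h = (\<lambda>m. tbH k m (emp_leaders A mu m))"
  have cmp: "mu (fst a) (snd a) - mu (fst b) (snd b) \<le> mu (fst c) (snd c) - mu (fst d) (snd d)
        \<longleftrightarrow> mu' (fst a) (snd a) - mu' (fst b) (snd b) \<le> mu' (fst c) (snd c) - mu' (fst d) (snd d)"
    if "a \<in> A" "b \<in> A" "c \<in> A" "d \<in> A" for a b c d
    using agree[OF that] unfolding emp_diff_le_def mu_def mu'_def .
  have leaders: "emp_leaders A mu = emp_leaders A mu'"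
  proof
    fix m
    have "mu j m \<le> mu i m \<longleftrightarrow> mu' j m \<le> mu' i m" if "(i, m) \<in> A" "(j, m) \<in> A" for i j
      using cmp[OF that(2) that(2) that(1) that(2)] by simp
    then show "emp_leaders A mu m = emp_leaders A mu' m"
      unfolding emp_leaders_def by blast
  qed
  have lead: "(h (snd p), snd p) \<in> A" if "p \<in> A" for p
    using emp_leader_mem[OF picks[of "snd p"] fin, of "fst p" _ mu] that
    unfolding h_def emp_leaders_def by simp
  have "emp_gap_maximisers A mu h = emp_gap_maximisers A mu' h"
    unfolding emp_gap_maximisers_def
  proof (intro Collect_cong conj_cong refl ball_cong)
    fix p q assume "p \<in> A" "q \<in> A"
    then show "mu (h (snd q)) (snd q) - mu (fst q) (snd q) \<le> mu (h (snd p)) (snd p) - mu (fst p) (snd p)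
      \<longleftrightarrow> mu' (h (snd q)) (snd q) - mu' (fst q) (snd q) \<le> mu' (h (snd p)) (snd p) - mu' (fst p) (snd p)"
      using cmp[OF lead[OF \<open>q \<in> A\<close>] \<open>q \<in> A\<close> lead[OF \<open>p \<in> A\<close>] \<open>p \<in> A\<close>] by simp
  qed
  then show ?thesis
    unfolding sar_step_eq Let_def mu_def[symmetric] mu'_def[symmetric] h_def leaders by simp
qed

lemma sar_output_cong:
  assumes picks: "\<And>k m. picks_from (tbH k m)"
    and agree: "\<And>k a b c d. k \<in> {1..M * K} \<Longrightarrow> a \<in> {1..K} \<times> {1..M} \<Longrightarrow> b \<in> {1..K} \<times> {1..M}
      \<Longrightarrow> c \<in> {1..K} \<times> {1..M} \<Longrightarrow> d \<in> {1..K} \<times> {1..M}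
      \<Longrightarrow> emp_diff_le \<omega> (sar_nk (M * K) n k) a b c d = emp_diff_le \<omega>' (sar_nk (M * K) n k) a b c d"
  shows "sar_output M K n tbH tbP tbR \<omega> = sar_output M K n tbH tbP tbR \<omega>'"
proof -
  have "sar_state M K n tbH tbP tbR \<omega> k = sar_state M K n tbH tbP tbR \<omega>' k" if "k \<le> M * K" for k
    using that
  proof (induction k)
    case (Suc k)
    obtain A J where st: "sar_state M K n tbH tbP tbR \<omega> k = (A, J)" by fastforce
    have A: "A \<subseteq> {1..K} \<times> {1..M}"
      using sar_state_subset[of M K n tbH tbP tbR \<omega> k] st by simp
    then have "finite A" using finite_subset by blast
    have "sar_step M K n tbH tbP tbR \<omega> (Suc k) (A, J) = sar_step M K n tbH tbP tbR \<omega>' (Suc k) (A, J)"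
      by (rule sar_step_cong[OF picks \<open>finite A\<close>], rule agree) (use A Suc.prems in auto)
    then show ?case
      using Suc st by simp
  qed simp
  then show ?thesis
    unfolding sar_output_def by simp
qed

lemma sar_error_event_sets:
  assumes laws: "bounded_reward_laws \<nu> M K" and picks: "\<And>k m. picks_from (tbH k m)"
  shows "{\<omega> \<in> space (reward_space M K n \<nu>). \<exists>m\<in>{1..M}. sar_output M K n tbH tbP tbR \<omega> m \<noteq> 1}
           \<in> sets (reward_space M K n \<nu>)"
proof -
  let ?B = "{1..K} \<times> {1..M}"
  let ?T = "\<lambda>\<omega> (k, a, b, c, d). emp_diff_le \<omega> (sar_nk (M * K) n k) a b c d"
  show ?thesis
  proof (rule sets_Collect_determined_by_finite_tests[where D = "{1..M * K} \<times> ?B \<times> ?B \<times> ?B \<times> ?B"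
        and T = ?T])
    fix x
    show "{\<omega> \<in> space (reward_space M K n \<nu>). ?T \<omega> x} \<in> sets (reward_space M K n \<nu>)"
      unfolding emp_diff_le_def
      by (cases x) (auto intro!: borel_measurable_le borel_measurable_diff
          borel_measurable_emp_mean[OF laws])
  next
    fix \<omega> \<omega>'
    assume "\<And>x. x \<in> {1..M * K} \<times> ?B \<times> ?B \<times> ?B \<times> ?B \<Longrightarrow> ?T \<omega> x = ?T \<omega>' x"
    then have "sar_output M K n tbH tbP tbR \<omega> = sar_output M K n tbH tbP tbR \<omega>'"
      by (intro sar_output_cong[where tbH = tbH, OF picks]) fastforce
    then show "(\<exists>m\<in>{1..M}. sar_output M K n tbH tbP tbR \<omega> m \<noteq> 1)
             \<Longrightarrow> (\<exists>m\<in>{1..M}. sar_output M K n tbH tbP tbR \<omega>' m \<noteq> 1)"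
      by simp
  qed simp
qed

section \<open>Concentration of the empirical means\<close>

lemma prob_space_reward_space:
  assumes "bounded_reward_laws \<nu> M K"
  shows "prob_space (reward_space M K n \<nu>)"
  unfolding reward_space_def
  by (rule prob_space_PiM) (use assms in \<open>auto simp: bounded_reward_laws_def\<close>)

lemma (in product_prob_space) indep_vars_PiM_components:
  assumes "finite I" "inj_on e S" "e ` S \<subseteq> I"
  shows "prob_space.indep_vars (PiM I M) (\<lambda>s. M (e s)) (\<lambda>s \<omega>. \<omega> (e s)) S"
proof (cases "S = {}")
  case True
  then show ?thesis by (simp add: P.indep_vars_def P.indep_sets_def)
next
  case False
  have rv: "(\<lambda>\<omega>. \<omega> (e s)) \<in> measurable (PiM I M) (M (e s))" if "s \<in> S" for s
    using assms(3) that by (intro measurable_component_singleton) auto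
  have "distr (PiM I M) (PiM S (\<lambda>s. M (e s))) (\<lambda>\<omega>. \<lambda>s\<in>S. \<omega> (e s)) = PiM S (\<lambda>s. M (e s))"
    using assms by (intro distr_reorder) auto
  also have "\<dots> = PiM S (\<lambda>s. distr (PiM I M) (M (e s)) (\<lambda>\<omega>. \<omega> (e s)))"
    using assms(3) by (intro PiM_cong refl distr_PiM_component[symmetric] M.prob_space_axioms) auto
  finally show ?thesis
    using P.indep_vars_iff_distr_eq_PiM'[OF False rv] by simp
qed

text \<open>The locale product_prob_space needs every factor to be a probability space, so the laws
  are extended by a point mass outside the index set.\<close>

lemma reward_space_product_prob_space:
  assumes laws: "bounded_reward_laws \<nu> M K"
  obtains F where "reward_space M K n \<nu> = PiM ({1..K} \<times> {1..M} \<times> {1..n}) F"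
    and "product_prob_space F"
    and "\<And>i m s. i \<in> {1..K} \<Longrightarrow> m \<in> {1..M} \<Longrightarrow> s \<in> {1..n} \<Longrightarrow> F (i, m, s) = \<nu> i m"
proof
  let ?I = "{1..K} \<times> {1..M} \<times> {1..n}"
  define F where "F = (\<lambda>x. if x \<in> ?I then (case x of (i, m, s) \<Rightarrow> \<nu> i m) else return borel (0::real))"
  show "reward_space M K n \<nu> = PiM ?I F"
    unfolding reward_space_def F_def by (rule PiM_cong) auto
  have "prob_space (F x)" for x
  proof (cases "x \<in> ?I")
    case True
    then obtain i m s where "x = (i, m, s)" "i \<in> {1..K}" "m \<in> {1..M}" by auto
    then show ?thesis using True laws by (simp add: F_def bounded_reward_laws_def)
  qed (simp add: F_def prob_space_return)
  then show "product_prob_space F"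
    by (rule product_prob_spaceI)
  show "F (i, m, s) = \<nu> i m" if "i \<in> {1..K}" "m \<in> {1..M}" "s \<in> {1..n}" for i m s
    using that by (simp add: F_def)
qed

lemma distr_reward_space_component:
  assumes laws: "bounded_reward_laws \<nu> M K"
    and x: "i \<in> {1..K}" "m \<in> {1..M}" "s \<in> {1..n}"
  shows "distr (reward_space M K n \<nu>) borel (\<lambda>\<omega>. \<omega> (i, m, s)) = \<nu> i m"
proof -
  obtain F where R_eq: "reward_space M K n \<nu> = PiM ({1..K} \<times> {1..M} \<times> {1..n}) F"
    and prod: "product_prob_space F"
    and F_eq: "F (i, m, s) = \<nu> i m"
    using reward_space_product_prob_space[OF laws] x by metis
  interpret product_prob_space F "{1..K} \<times> {1..M} \<times> {1..n}" by (rule prod)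
  have "sets (F (i, m, s)) = sets borel"
    using laws x F_eq by (simp add: bounded_reward_laws_def)
  then have "distr (reward_space M K n \<nu>) borel (\<lambda>\<omega>. \<omega> (i, m, s))
      = distr (reward_space M K n \<nu>) (F (i, m, s)) (\<lambda>\<omega>. \<omega> (i, m, s))"
    by (intro distr_cong) simp_all
  also have "\<dots> = F (i, m, s)"
    unfolding R_eq using x by (intro distr_PiM_component M.prob_space_axioms) auto
  finally show ?thesis using F_eq by simp
qed

lemma indep_vars_reward_space_arm:
  assumes laws: "bounded_reward_laws \<nu> M K"
    and arm: "i \<in> {1..K}" "m \<in> {1..M}" and "t \<le> n"
  shows "prob_space.indep_vars (reward_space M K n \<nu>) (\<lambda>_. borel) (\<lambda>s \<omega>. \<omega> (i, m, s)) {1..t}"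
proof -
  let ?I = "{1..K} \<times> {1..M} \<times> {1..n}"
  obtain F where R_eq: "reward_space M K n \<nu> = PiM ?I F"
    and prod: "product_prob_space F"
    and F_eq: "\<And>s. s \<in> {1..n} \<Longrightarrow> F (i, m, s) = \<nu> i m"
    using reward_space_product_prob_space[OF laws] arm by metis
  interpret product_prob_space F ?I by (rule prod)
  define X where "X = (\<lambda>s (\<omega>::nat \<times> nat \<times> nat \<Rightarrow> real). \<omega> (i, m, s))"
  have "P.indep_vars (\<lambda>s. F (i, m, s)) X {1..t}"
    unfolding X_def using arm \<open>t \<le> n\<close> by (intro indep_vars_PiM_components) (auto simp: inj_on_def)
  moreover have "(\<lambda>y. y) \<in> measurable (F (i, m, s)) borel" if "s \<in> {1..t}" for s
  proof -
    have "s \<in> {1..n}" using that \<open>t \<le> n\<close> by simp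
    then show ?thesis
      using laws arm by (simp add: F_eq bounded_reward_laws_def measurable_ident_sets)
  qed
  ultimately have "P.indep_vars (\<lambda>_. borel) X {1..t}"
    using P.indep_vars_compose2[of "\<lambda>s. F (i, m, s)" X "{1..t}" "\<lambda>_ y. y" "\<lambda>_. borel"] by simp
  then show ?thesis unfolding R_eq X_def .
qed

lemma emp_mean_deviation_prob:
  assumes laws: "bounded_reward_laws \<nu> M K"
    and arm: "i \<in> {1..K}" "m \<in> {1..M}" and t: "1 \<le> t" "t \<le> n" and \<epsilon>: "0 \<le> \<epsilon>"
  shows "measure (reward_space M K n \<nu>) (deviation_event M K n \<nu> t i m \<epsilon>) \<le> 2 * exp (-2 * real t * \<epsilon>\<^sup>2)"
proof -
  let ?R = "reward_space M K n \<nu>"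
  define X where "X = (\<lambda>s (\<omega>::nat \<times> nat \<times> nat \<Rightarrow> real). \<omega> (i, m, s))"
  interpret R: prob_space ?R by (rule prob_space_reward_space[OF laws])
  have rv: "X s \<in> borel_measurable ?R" for s
    unfolding X_def by (rule borel_measurable_reward_space_component[OF laws])
  have distr_X: "distr ?R borel (X s) = \<nu> i m" if "s \<in> {1..t}" for s
    unfolding X_def using distr_reward_space_component[OF laws arm] that t by simp
  interpret H: Hoeffding_ineq_iid ?R "{1..t}" X "X 1" 0 1 "arm_mean \<nu> i m"
  proof unfold_locales
    have distr_X1: "distr ?R borel (X 1) = \<nu> i m"
      by (rule distr_X) (use t in simp)
    have "AE x in \<nu> i m. x \<in> {0..1}"
      using laws arm by (simp add: bounded_reward_laws_def)
    then have "AE x in distr ?R borel (X 1). x \<in> {0..1}"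
      unfolding distr_X1 .
    then show "AE \<omega> in ?R. X 1 \<omega> \<in> {0..1}"
      using rv by (simp add: AE_distr_iff)
    have "R.expectation (X 1) = integral\<^sup>L (distr ?R borel (X 1)) (\<lambda>x. x)"
      by (rule integral_distr[symmetric]) (simp_all add: rv)
    then show "arm_mean \<nu> i m \<equiv> R.expectation (X 1)"
      unfolding distr_X1 by (simp add: arm_mean_def)
  qed (use indep_vars_reward_space_arm[OF laws arm t(2)] distr_X t rv in \<open>simp_all add: X_def\<close>)
  have "deviation_event M K n \<nu> t i m \<epsilon>
      = {\<omega> \<in> space ?R. \<bar>(\<Sum>s\<in>{1..t}. X s \<omega>) / real (card {1..t}) - arm_mean \<nu> i m\<bar> \<ge> \<epsilon>}"
    by (simp add: deviation_event_def emp_mean_def X_def)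
  then show ?thesis
    using H.Hoeffding_ineq_abs_ge'[OF \<epsilon>] t by simp
qed

section \<open>Phase lengths\<close>

lemma logbar_ge_half: "1 / 2 \<le> logbar N"
  unfolding logbar_def by (simp add: sum_nonneg)

lemma sar_nk_eq:
  assumes "1 \<le> k"
  shows "sar_nk N n k = nat \<lceil>(real n - real N) / (logbar N * real (N + 1 - k))\<rceil>"
  using assms by (simp add: sar_nk_def)

lemma sar_nk_bounds:
  assumes "N < n" "1 \<le> k" "k < N"
  shows "1 \<le> sar_nk N n k" "sar_nk N n k \<le> n"
proof -
  define c where "c = logbar N * real (N + 1 - k)"
  have "1 \<le> c"
    using logbar_ge_half[of N] assms(3) mult_mono[of "1/2" "logbar N" 2 "real (N + 1 - k)"]
    unfolding c_def by auto
  then have "0 < (real n - real N) / c" "(real n - real N) / c \<le> real n - real N"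
    using assms(1) by (auto simp: divide_le_eq mult_le_cancel_left1)
  then show "1 \<le> sar_nk N n k" "sar_nk N n k \<le> n"
    unfolding sar_nk_eq[OF assms(2)] c_def[symmetric] using assms(1) by linarith+
qed

text \<open>The length of phase k pays for the (N+1-k)-th smallest gap D, since N+1-k \<le> H D^2.\<close>

lemma sar_nk_mult_gap_sq:
  assumes "N < n" "1 \<le> k" "k < N" "0 < D" and H: "real (N + 1 - k) / D\<^sup>2 \<le> H"
  shows "(real n - real N) / (logbar N * H) \<le> real (sar_nk N n k) * D\<^sup>2"
proof -
  define c where "c = real (N + 1 - k)"
  define L where "L = logbar N"
  have pos: "0 < c" "0 < L" "0 < real n - real N"
    using assms(1,3) logbar_ge_half[of N] by (auto simp: c_def L_def)
  then have "0 < c / D\<^sup>2" using assms(4) by simp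
  then have "0 < H" using H unfolding c_def by linarith
  have "c \<le> H * D\<^sup>2" using H assms(4) by (simp add: c_def divide_le_eq)
  then have "1 / H \<le> D\<^sup>2 / c"
    using pos \<open>0 < H\<close> by (simp add: field_simps)
  then have "(real n - real N) / L * (1 / H) \<le> (real n - real N) / L * (D\<^sup>2 / c)"
    using pos by (intro mult_left_mono) simp_all
  then have "(real n - real N) / (L * H) \<le> (real n - real N) / (L * c) * D\<^sup>2"
    by simp
  also have "\<dots> \<le> real (sar_nk N n k) * D\<^sup>2"
    unfolding sar_nk_eq[OF assms(2)] c_def L_def
    by (intro mult_right_mono) (simp_all add: real_nat_ceiling_ge)
  finally show ?thesis unfolding L_def .
qed

lemma phase_deviation_prob:
  assumes laws: "bounded_reward_laws \<nu> M K" and means: "strictly_ordered_means \<nu> M K"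
    and K: "2 \<le> K" and n: "M * K < n" and k: "k \<in> {1..M * K - 1}"
    and arm: "i \<in> {1..K}" "m \<in> {1..M}"
  shows "measure (reward_space M K n \<nu>)
           (deviation_event M K n \<nu> (sar_nk (M * K) n k) i m (sorted_gaps \<nu> M K ! (M * K - k) / 4))
         \<le> 2 * exp (- (real n - real (M * K)) / (8 * logbar (M * K) * H2 \<nu> M K))"
proof -
  define D where "D = sorted_gaps \<nu> M K ! (M * K - k)"
  define t where "t = sar_nk (M * K) n k"
  have k': "1 \<le> k" "k < M * K" using k by auto
  have "0 < D" unfolding D_def using k' by (intro sorted_gaps_nth_pos[OF means K]) auto
  have "real (M * K + 1 - k) / D\<^sup>2 \<le> H2 \<nu> M K"
    using H2_ge[of "M * K + 1 - k"] k' unfolding D_def by (simp add: Suc_diff_le)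
  from sar_nk_mult_gap_sq[OF n k' \<open>0 < D\<close> this]
  have "(real n - real (M * K)) / (logbar (M * K) * H2 \<nu> M K) \<le> real t * D\<^sup>2"
    unfolding t_def .
  moreover have "- 2 * real t * (D / 4)\<^sup>2 = - (real t * D\<^sup>2) / 8"
    by (simp add: power2_eq_square)
  moreover have "- ((real n - real (M * K)) / (logbar (M * K) * H2 \<nu> M K)) / 8
      = - (real n - real (M * K)) / (8 * logbar (M * K) * H2 \<nu> M K)"
    by (simp only: minus_divide_left divide_divide_eq_left mult_ac)
  ultimately have "- 2 * real t * (D / 4)\<^sup>2
      \<le> - (real n - real (M * K)) / (8 * logbar (M * K) * H2 \<nu> M K)"
    by linarith
  moreover have "measure (reward_space M K n \<nu>) (deviation_event M K n \<nu> t i m (D / 4))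
     \<le> 2 * exp (- 2 * real t * (D / 4)\<^sup>2)"
    using sar_nk_bounds[OF n k'] \<open>0 < D\<close> unfolding t_def
    by (intro emp_mean_deviation_prob[OF laws arm]) simp_all
  ultimately show ?thesis
    unfolding D_def t_def by (smt (verit) exp_le_cancel_iff)
qed

lemma sar_error_event_subset:
  assumes M: "1 \<le> M" and means: "strictly_ordered_means \<nu> M K" and K: "2 \<le> K"
    and picks: "\<And>k m. picks_from (tbH k m)" "\<And>k. picks_from (tbP k)" "\<And>k. picks_from (tbR k)"
  shows "{\<omega> \<in> space (reward_space M K n \<nu>). \<exists>m\<in>{1..M}. sar_output M K n tbH tbP tbR \<omega> m \<noteq> 1}
    \<subseteq> (\<Union>(k, i, m) \<in> {1..M * K - 1} \<times> {1..K} \<times> {1..M}.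
          deviation_event M K n \<nu> (sar_nk (M * K) n k) i m (sorted_gaps \<nu> M K ! (M * K - k) / 4))"
proof
  fix \<omega> assume "\<omega> \<in> {\<omega> \<in> space (reward_space M K n \<nu>). \<exists>m\<in>{1..M}. sar_output M K n tbH tbP tbR \<omega> m \<noteq> 1}"
  then obtain m where \<omega>: "\<omega> \<in> space (reward_space M K n \<nu>)" "m \<in> {1..M}"
    "sar_output M K n tbH tbP tbR \<omega> m \<noteq> 1"
    by blast
  have "\<exists>k\<in>{1..M * K - 1}. \<not> estimates_within \<nu> M K (emp_mean \<omega> (sar_nk (M * K) n k))
          (sorted_gaps \<nu> M K ! (M * K - k) / 4)"
  proof (rule ccontr)
    assume "\<not> ?thesis"
    then have "sar_output M K n tbH tbP tbR \<omega> m = 1"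
      by (intro sar_output_correct[where tbH = tbH and tbP = tbP and tbR = tbR,
            OF M means K picks _ \<omega>(2)]) blast
    with \<omega>(3) show False by simp
  qed
  then obtain k i m' where "k \<in> {1..M * K - 1}" "i \<in> {1..K}" "m' \<in> {1..M}"
    "\<omega> \<in> deviation_event M K n \<nu> (sar_nk (M * K) n k) i m' (sorted_gaps \<nu> M K ! (M * K - k) / 4)"
    using \<omega>(1) unfolding estimates_within_def deviation_event_def by (auto simp: not_less)
  then show "\<omega> \<in> (\<Union>(k, i, m) \<in> {1..M * K - 1} \<times> {1..K} \<times> {1..M}.
      deviation_event M K n \<nu> (sar_nk (M * K) n k) i m (sorted_gaps \<nu> M K ! (M * K - k) / 4))"
    by blast
qed

lemma sar_error_prob_le:
  assumes M: "1 \<le> M" and K: "2 \<le> K" and n: "M * K \<le> n"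
    and laws: "bounded_reward_laws \<nu> M K" and means: "strictly_ordered_means \<nu> M K"
    and picks: "\<And>k m. picks_from (tbH k m)" "\<And>k. picks_from (tbP k)" "\<And>k. picks_from (tbR k)"
  shows "measure (reward_space M K n \<nu>)
           {\<omega> \<in> space (reward_space M K n \<nu>). \<exists>m\<in>{1..M}. sar_output M K n tbH tbP tbR \<omega> m \<noteq> 1}
         \<le> 2 * real M ^ 2 * real K ^ 2
             * exp (- (real n - real (M * K)) / (8 * logbar (M * K) * H2 \<nu> M K))"
proof -
  let ?R = "reward_space M K n \<nu>"
  let ?Err = "{\<omega> \<in> space ?R. \<exists>m\<in>{1..M}. sar_output M K n tbH tbP tbR \<omega> m \<noteq> 1}"
  let ?E = "exp (- (real n - real (M * K)) / (8 * logbar (M * K) * H2 \<nu> M K))"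
  let ?Idx = "{1..M * K - 1} \<times> {1..K} \<times> {1..M}"
  let ?Bad = "\<lambda>(k, i, m). deviation_event M K n \<nu> (sar_nk (M * K) n k) i m (sorted_gaps \<nu> M K ! (M * K - k) / 4)"
  interpret R: prob_space ?R by (rule prob_space_reward_space[OF laws])
  have "1 \<le> real M" "1 \<le> real K" using M K by simp_all
  then have MK: "1 * 1 \<le> real M ^ 2 * real K ^ 2"
    by (intro mult_mono one_le_power) simp_all
  show ?thesis
  proof (cases "n = M * K")
    case True
    then show ?thesis using R.prob_le_1[of ?Err] MK by simp
  next
    case False
    with n have n: "M * K < n" by simp
    have Bad_sets: "?Bad x \<in> sets ?R" for x
      by (cases x) (simp add: deviation_event_sets[OF laws])
    have "R.prob ?Err \<le> R.prob (\<Union> (?Bad ` ?Idx))"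
      using sar_error_event_subset[where tbH = tbH and tbP = tbP and tbR = tbR, OF M means K picks]
        Bad_sets by (intro R.finite_measure_mono) auto
    also have "\<dots> \<le> (\<Sum>x\<in>?Idx. R.prob (?Bad x))"
      using Bad_sets by (intro measure_UNION_le) auto
    also have "\<dots> \<le> real (card ?Idx) * (2 * ?E)"
      using phase_deviation_prob[OF laws means K n] by (intro sum_bounded_above) auto
    also have "\<dots> \<le> real (M * K) ^ 2 * (2 * ?E)"
    proof -
      have "card ?Idx \<le> (M * K) ^ 2"
        by (simp add: card_cartesian_product power2_eq_square mult_ac)
      then have "real (card ?Idx) \<le> real (M * K) ^ 2"
        by (metis of_nat_le_iff of_nat_power)
      then show ?thesis by (intro mult_right_mono) simp_all
    qed
    finally show ?thesis by (simp add: power_mult_distrib mult_ac)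
  qed
qed

theorem theorem2:
  fixes M K n :: nat
    and \<nu> :: "nat \<Rightarrow> nat \<Rightarrow> real measure"
    and tbH :: "nat \<Rightarrow> nat \<Rightarrow> nat set \<Rightarrow> nat"
    and tbP :: "nat \<Rightarrow> nat set \<Rightarrow> nat"
    and tbR :: "nat \<Rightarrow> (nat \<times> nat) set \<Rightarrow> nat \<times> nat"
  assumes "M \<ge> 1" and "K \<ge> 2" and "n \<ge> M * K"
    and "\<forall>i\<in>{1..K}. \<forall>m\<in>{1..M}. prob_space (\<nu> i m) \<and> sets (\<nu> i m) = sets borel
           \<and> (AE x in \<nu> i m. x \<in> {0..1})"
    and "\<forall>m\<in>{1..M}. \<forall>i j. 1 \<le> i \<longrightarrow> i < j \<longrightarrow> j \<le> K \<longrightarrow> arm_mean \<nu> j m < arm_mean \<nu> i m"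
    and "\<forall>k m S. finite S \<longrightarrow> S \<noteq> {} \<longrightarrow> tbH k m S \<in> S"
    and "\<forall>k S. finite S \<longrightarrow> S \<noteq> {} \<longrightarrow> tbP k S \<in> S"
    and "\<forall>k S. finite S \<longrightarrow> S \<noteq> {} \<longrightarrow> tbR k S \<in> S"
  shows "{\<omega> \<in> space (reward_space M K n \<nu>).
            \<exists>m\<in>{1..M}. sar_output M K n tbH tbP tbR \<omega> m \<noteq> 1} \<in> sets (reward_space M K n \<nu>)
       \<and> measure (reward_space M K n \<nu>)
           {\<omega> \<in> space (reward_space M K n \<nu>). \<exists>m\<in>{1..M}. sar_output M K n tbH tbP tbR \<omega> m \<noteq> 1}
         \<le> 2 * real M ^ 2 * real K ^ 2
             * exp (- (real n - real (M * K)) / (8 * logbar (M * K) * H2 \<nu> M K))"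
proof -
  have laws: "bounded_reward_laws \<nu> M K" and means: "strictly_ordered_means \<nu> M K"
    and picks: "\<And>k m. picks_from (tbH k m)" "\<And>k. picks_from (tbP k)" "\<And>k. picks_from (tbR k)"
    using assms(4-8) by (simp_all add: bounded_reward_laws_def strictly_ordered_means_def picks_from_def)
  show ?thesis
    using sar_error_event_sets[where tbH = tbH, OF laws picks(1)]
      sar_error_prob_le[where tbH = tbH and tbP = tbP and tbR = tbR, OF assms(1-3) laws means picks]
    by blast
qed

end
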